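(* Let $p\ge 1$, let $k_j>0$, let $\Gamma$ be a real symmetric positive definite $p\times p$ matrix, and let $B$ be a real symmetric $p\times p$ matrix. Consider the optimization problem \[ \max_{Y\in\mathbb{S}_+^p}\; -\operatorname{tr}\big(Y\Gamma^{-1}\big)+k_j\log\det\Big(B+\tfrac{1}{k_j}Y\Big)\quad\text{subject to}\quad -k_jB\prec Y . \] Then an optimal solution of this problem is \[ Y^\ast=k_j\,\Gamma^{1/2}\,\mathrm{proj}_{\mathbb{S}_+^p}\Big(I-\Gamma^{-1/2}B\Gamma^{-1/2}\Big)\,\Gamma^{1/2}. \]
   Context: $\mathbb{S}_+^p$ denotes the set of real symmetric positive semi-definite $p\times p$ matrices. For symmetric matrices $X,Y$, $X\prec Y$ means $Y-X$ is positive definite; $I$ is the identity. $\Gamma^{1/2}$ is the symmetric positive definite square root of $\Gamma$ and $\Gamma^{-1/2}$ its inverse. $\mathrm{proj}_{\mathbb{S}_+^p}$ is the Frobenius-norm orthogonal projection onto $\mathbb{S}_+^p$ (for a symmetric matrix with eigen-decomposition $U\mathrm{diag}(\lambda)U^{\mathsf T}$ it equals $U\mathrm{diag}(\max(\lambda,0))U^{\mathsf T}$). *)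

theory Defs
  imports "HOL-Analysis.Analysis"
begin

type_synonym 'n sqmat = "real^'n^'n"

definition symmetric_mat :: "real^'n^'n \<Rightarrow> bool" where
  "symmetric_mat A \<longleftrightarrow> transpose A = A"

definition psd_mat :: "real^'n^'n \<Rightarrow> bool" where
  "psd_mat A \<longleftrightarrow> symmetric_mat A \<and> (\<forall>x. 0 \<le> x \<bullet> (A *v x))"

definition pd_mat :: "real^'n^'n \<Rightarrow> bool" where
  "pd_mat A \<longleftrightarrow> symmetric_mat A \<and> (\<forall>x. x \<noteq> 0 \<longrightarrow> 0 < x \<bullet> (A *v x))"

definition loewner_less :: "real^'n^'n \<Rightarrow> real^'n^'n \<Rightarrow> bool" where
  "loewner_less X Y \<longleftrightarrow> symmetric_mat X \<and> symmetric_mat Y \<and> pd_mat (Y - X)"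

definition mat_sqrt :: "real^'n^'n \<Rightarrow> real^'n^'n" where
  "mat_sqrt G = (THE S. pd_mat S \<and> S ** S = G)"

definition frob_norm :: "real^'n^'n \<Rightarrow> real" where
  "frob_norm A = sqrt (\<Sum>i\<in>UNIV. \<Sum>j\<in>UNIV. (A $ i $ j)^2)"

definition proj_psd :: "real^'n^'n \<Rightarrow> real^'n^'n" where
  "proj_psd X = (THE P. psd_mat P \<and> (\<forall>Q. psd_mat Q \<longrightarrow> frob_norm (X - P) \<le> frob_norm (X - Q)))"

definition objective :: "real \<Rightarrow> real^'n^'n \<Rightarrow> real^'n^'n \<Rightarrow> real^'n^'n \<Rightarrow> real" where
  "objective k G B Y = - trace (Y ** matrix_inv G) + k * ln (det (B + (1/k) *\<^sub>R Y))"

definition feasible :: "real \<Rightarrow> real^'n^'n \<Rightarrow> real^'n^'n \<Rightarrow> bool" where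
  "feasible k B Y \<longleftrightarrow> psd_mat Y \<and> loewner_less (- (k *\<^sub>R B)) Y"

end

theory Submission
  imports Defs
begin

text \<open>
  Write \<open>S = \<Gamma>\<^sup>1\<^sup>/\<^sup>2\<close> and whiten the variable: \<open>Z = S\<^sup>-\<^sup>1 (B + Y/k) S\<^sup>-\<^sup>1\<close>. Then the objective is
  \<open>k (ln det Z - tr Z)\<close> plus a constant, and \<open>Y\<close> is feasible iff \<open>Z \<succ> 0\<close> and \<open>Z \<succeq> C\<close>, where
  \<open>C = S\<^sup>-\<^sup>1 B S\<^sup>-\<^sup>1\<close>. Diagonalise \<open>C = U diag(c) U\<^sup>T\<close> and put \<open>e\<^sub>i = max 1 c\<^sub>i\<close>. In the basis \<open>U\<close>,
  rescaling \<open>Z\<close> by \<open>diag(e)\<^sup>-\<^sup>1\<^sup>/\<^sup>2\<close> and using \<open>ln det V \<le> tr V - p\<close> for \<open>V \<succ> 0\<close> together with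
  the diagonal bounds \<open>Z\<^sub>i\<^sub>i \<ge> c\<^sub>i\<close> gives \<open>ln det Z - tr Z \<le> \<Sum>\<^sub>i (ln e\<^sub>i - e\<^sub>i)\<close>, with equality at
  \<open>Z = U diag(e) U\<^sup>T\<close>. Undoing the whitening, this optimum is \<open>Y = k S (U diag(e - c) U\<^sup>T) S\<close>, and
  \<open>U diag(e - c) U\<^sup>T = U diag(max (1 - c) 0) U\<^sup>T\<close> is the projection of \<open>I - C\<close> onto the PSD cone.
\<close>

lemma inner_matrix_vector_mult_transpose:
  fixes A :: "real^'n^'m"
  shows "(A *v x) \<bullet> y = x \<bullet> (transpose A *v y)"
  by (metis dot_lmul_matrix inner_commute transpose_matrix_vector)

lemma symmetric_mat_inner:
  "symmetric_mat A \<Longrightarrow> (A *v x) \<bullet> y = x \<bullet> (A *v y)"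
  by (simp add: inner_matrix_vector_mult_transpose symmetric_mat_def)

lemma matrix_diff_ldistrib: "(A :: 'a::ring_1^'n^'m) ** (B - C) = A ** B - A ** C"
  by (simp add: vec_eq_iff matrix_matrix_mult_def sum_subtractf algebra_simps)

lemma matrix_diff_rdistrib: "((A :: 'a::ring_1^'n^'m) - B) ** C = A ** C - B ** C"
  by (simp add: vec_eq_iff matrix_matrix_mult_def sum_subtractf algebra_simps)

lemma matrix_add_rdistrib: "((A :: 'a::semiring_1^'n^'m) + B) ** C = A ** C + B ** C"
  by (simp add: vec_eq_iff matrix_matrix_mult_def sum.distrib algebra_simps)

lemma matrix_inv_unique:
  fixes A B :: "'a::field^'n^'n"
  assumes "A ** B = mat 1"
  shows "matrix_inv A = B"
  unfolding matrix_inv_def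
proof (rule some_equality)
  show "A ** B = mat 1 \<and> B ** A = mat 1" using assms matrix_left_right_inverse by blast
next
  fix C assume "A ** C = mat 1 \<and> C ** A = mat 1"
  then show "C = B" using assms by (metis matrix_mul_assoc matrix_mul_lid matrix_mul_rid)
qed

lemma matrix_inv:
  fixes A :: "'a::field^'n^'n"
  assumes "invertible A"
  shows "A ** matrix_inv A = mat 1" "matrix_inv A ** A = mat 1"
  using assms matrix_inv_unique[of A] matrix_left_right_inverse[of A]
  by (auto simp: invertible_right_inverse)

lemma symmetric_mat_add: "symmetric_mat A \<Longrightarrow> symmetric_mat B \<Longrightarrow> symmetric_mat (A + B)"
  by (simp add: symmetric_mat_def transpose_def vec_eq_iff)

lemma symmetric_mat_scaleR: "symmetric_mat A \<Longrightarrow> symmetric_mat (c *\<^sub>R A)"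
  by (simp add: symmetric_mat_def transpose_scalar)

lemma symmetric_mat_congruence: "symmetric_mat A \<Longrightarrow> symmetric_mat (transpose P ** A ** P)"
  by (simp add: symmetric_mat_def matrix_transpose_mul matrix_mul_assoc)

lemma symmetric_mat_matrix_inv:
  assumes "symmetric_mat A" "invertible A"
  shows "symmetric_mat (matrix_inv A)"
proof -
  have "transpose (matrix_inv A ** A) = mat 1" by (simp add: matrix_inv(2)[OF assms(2)])
  then have "A ** transpose (matrix_inv A) = mat 1"
    using assms(1) by (simp add: matrix_transpose_mul symmetric_mat_def)
  then have "matrix_inv A = transpose (matrix_inv A)" by (rule matrix_inv_unique)
  then show ?thesis by (simp add: symmetric_mat_def)
qed

lemma quadratic_form_congruence:
  fixes P :: "real^'m^'n" and A :: "real^'n^'n"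
  shows "x \<bullet> ((transpose P ** A ** P) *v x) = (P *v x) \<bullet> (A *v (P *v x))"
  by (simp flip: matrix_vector_mul_assoc add: inner_matrix_vector_mult_transpose)

lemma psd_mat_congruence: "psd_mat A \<Longrightarrow> psd_mat (transpose P ** A ** P)"
  unfolding psd_mat_def quadratic_form_congruence by (auto intro: symmetric_mat_congruence)

lemma pd_mat_congruence:
  fixes A P :: "real^'n^'n"
  assumes "pd_mat A" "invertible P"
  shows "pd_mat (transpose P ** A ** P)"
proof -
  have "P *v x \<noteq> 0" if "x \<noteq> 0" for x
    using inj_matrix_vector_mult[OF assms(2)] that by (metis injD matrix_vector_mult_0_right)
  then show ?thesis
    using assms(1) by (simp add: pd_mat_def symmetric_mat_congruence quadratic_form_congruence)
qed

lemma congruence_inverse: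
  fixes A P :: "real^'n^'n"
  assumes "invertible P"
  shows "transpose (matrix_inv P) ** (transpose P ** A ** P) ** matrix_inv P = A"
proof -
  have "transpose (matrix_inv P) ** transpose P = transpose (P ** matrix_inv P)"
    by (simp add: matrix_transpose_mul)
  then have inv: "transpose (matrix_inv P) ** transpose P = mat 1"
    by (simp add: matrix_inv[OF assms])
  have "transpose (matrix_inv P) ** (transpose P ** A ** P) ** matrix_inv P
      = (transpose (matrix_inv P) ** transpose P) ** A ** (P ** matrix_inv P)"
    by (simp add: matrix_mul_assoc)
  then show ?thesis by (simp add: inv matrix_inv[OF assms])
qed

lemma psd_mat_congruence_iff:
  fixes A P :: "real^'n^'n"
  assumes "invertible P"
  shows "psd_mat (transpose P ** A ** P) \<longleftrightarrow> psd_mat A"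
  using psd_mat_congruence[of "transpose P ** A ** P" "matrix_inv P"] psd_mat_congruence[of A P]
  by (auto simp: congruence_inverse[OF assms])

lemma pd_mat_congruence_iff:
  fixes A P :: "real^'n^'n"
  assumes "invertible P"
  shows "pd_mat (transpose P ** A ** P) \<longleftrightarrow> pd_mat A"
proof -
  have "invertible (matrix_inv P)"
    using matrix_inv[OF assms] by (auto simp: invertible_def)
  then show ?thesis
    using pd_mat_congruence[of "transpose P ** A ** P" "matrix_inv P"] pd_mat_congruence[of A P] assms
    by (auto simp: congruence_inverse[OF assms])
qed

lemma psd_mat_add: "psd_mat A \<Longrightarrow> psd_mat B \<Longrightarrow> psd_mat (A + B)"
  by (auto simp: psd_mat_def symmetric_mat_add matrix_vector_mult_add_rdistrib inner_add_right)

lemma psd_mat_scaleR: "psd_mat A \<Longrightarrow> 0 \<le> c \<Longrightarrow> psd_mat (c *\<^sub>R A)"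
  by (auto simp: psd_mat_def symmetric_mat_scaleR simp flip: scaleR_matrix_vector_assoc)

lemma psd_mat_scaleR_iff: "0 < c \<Longrightarrow> psd_mat (c *\<^sub>R A) \<longleftrightarrow> psd_mat A"
  using psd_mat_scaleR[of A c] psd_mat_scaleR[of "c *\<^sub>R A" "1/c"] by auto

lemma pd_mat_scaleR_iff: "0 < c \<Longrightarrow> pd_mat (c *\<^sub>R A) \<longleftrightarrow> pd_mat A"
  using symmetric_mat_scaleR[of A c] symmetric_mat_scaleR[of "c *\<^sub>R A" "1/c"]
  by (auto simp: pd_mat_def zero_less_mult_iff simp flip: scaleR_matrix_vector_assoc)

lemma quadratic_form_axis: "axis i 1 \<bullet> ((A::real^'n^'n) *v axis i 1) = A $ i $ i"
  by (simp add: matrix_vector_mult_basis inner_axis' column_def)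

lemma psd_mat_diagonal_nonneg: "psd_mat A \<Longrightarrow> 0 \<le> A $ i $ i"
  by (metis psd_mat_def quadratic_form_axis)

lemma pd_mat_diagonal_pos: "pd_mat A \<Longrightarrow> 0 < A $ i $ i"
  by (metis pd_mat_def quadratic_form_axis axis_eq_0_iff zero_neq_one)

definition diag_mat :: "('n \<Rightarrow> 'a::zero) \<Rightarrow> 'a^'n^'n" where
  "diag_mat d = (\<chi> i j. if i = j then d i else 0)"

lemma matrix_mult_diag_mat: "(A ** diag_mat d) $ i $ j = A $ i $ j * (d j :: 'a::semiring_1)"
  unfolding matrix_matrix_mult_def diag_mat_def
  by (simp add: if_distrib[of "\<lambda>x. _ * x"] sum.delta' cong: if_cong)

lemma diag_mat_mult: "(diag_mat d ** A) $ i $ j = (d i :: 'a::semiring_1) * A $ i $ j"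
  unfolding matrix_matrix_mult_def diag_mat_def
  by (simp add: if_distrib[of "\<lambda>x. x * _"] sum.delta cong: if_cong)

lemma diag_mat_mult_diag_mat:
  "diag_mat a ** diag_mat b = diag_mat (\<lambda>i. a i * (b i :: 'a::semiring_1))"
  by (simp add: vec_eq_iff matrix_mult_diag_mat) (simp add: diag_mat_def)

lemma diag_mat_diff: "diag_mat a - diag_mat b = diag_mat (\<lambda>i. a i - (b i :: 'a::group_add))"
  by (simp add: vec_eq_iff diag_mat_def)

lemma diag_mat_one: "diag_mat (\<lambda>i. 1) = (mat 1 :: 'a::semiring_1^'n^'n)"
  by (simp add: vec_eq_iff diag_mat_def mat_def)

lemma transpose_diag_mat: "transpose (diag_mat d) = diag_mat d"
  by (simp add: vec_eq_iff diag_mat_def transpose_def)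

lemma det_diag_mat: "det (diag_mat d) = (\<Prod>i\<in>UNIV. d i :: 'a::comm_ring_1)"
  by (subst det_diagonal) (auto simp: diag_mat_def)

lemma trace_diag_mat: "trace (diag_mat d) = (\<Sum>i\<in>UNIV. d i :: 'a::semiring_1)"
  by (simp add: trace_def diag_mat_def)

lemma matrix_vector_mult_diag_mat: "diag_mat d *v x = (\<chi> i. d i * (x $ i :: 'a::semiring_1))"
  unfolding matrix_vector_mult_def diag_mat_def
  by (simp add: if_distrib[of "\<lambda>y. y * _"] sum.delta cong: if_cong)

lemma quadratic_form_diag_mat: "x \<bullet> (diag_mat d *v x) = (\<Sum>i\<in>UNIV. d i * (x $ i)\<^sup>2)"
  by (simp add: matrix_vector_mult_diag_mat inner_vec_def power2_eq_square mult_ac)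

lemma psd_mat_diag_mat_iff: "psd_mat (diag_mat d) \<longleftrightarrow> (\<forall>i. 0 \<le> d i)"
proof
  show "psd_mat (diag_mat d) \<Longrightarrow> \<forall>i. 0 \<le> d i"
    using psd_mat_diagonal_nonneg by (fastforce simp: diag_mat_def)
  show "\<forall>i. 0 \<le> d i \<Longrightarrow> psd_mat (diag_mat d)"
    by (simp add: psd_mat_def symmetric_mat_def transpose_diag_mat quadratic_form_diag_mat sum_nonneg)
qed

lemma pd_mat_diag_mat_iff:
  fixes d :: "'n::finite \<Rightarrow> real"
  shows "pd_mat (diag_mat d) \<longleftrightarrow> (\<forall>i. 0 < d i)"
proof
  show "pd_mat (diag_mat d) \<Longrightarrow> \<forall>i. 0 < d i"
    using pd_mat_diagonal_pos by (fastforce simp: diag_mat_def)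
next
  assume pos: "\<forall>i. 0 < d i"
  have "0 < (\<Sum>i\<in>UNIV. d i * (x $ i)\<^sup>2)" if "x \<noteq> 0" for x :: "real^'n"
  proof -
    obtain j where "x $ j \<noteq> 0" using \<open>x \<noteq> 0\<close> by (auto simp: vec_eq_iff)
    then have "0 < d j * (x $ j)\<^sup>2" using pos by simp
    also have "\<dots> \<le> (\<Sum>i\<in>UNIV. d i * (x $ i)\<^sup>2)"
      by (rule member_le_sum) (simp_all add: pos less_imp_le)
    finally show ?thesis .
  qed
  then show "pd_mat (diag_mat d)"
    by (simp add: pd_mat_def symmetric_mat_def transpose_diag_mat quadratic_form_diag_mat)
qed

section \<open>Spectral theorem for real symmetric matrices\<close>

lemma quadratic_nonpos_imp_linear_coeff_zero:
  fixes b c :: real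
  assumes "\<And>t. t * b + t\<^sup>2 * c \<le> 0"
  shows "b = 0"
proof (rule ccontr)
  assume "b \<noteq> 0"
  define s where "s = c\<^sup>2 + 1"
  define t where "t = b / s"
  have "0 < s" by (simp add: s_def add_nonneg_pos)
  then have "t * b + t\<^sup>2 * c = b\<^sup>2 * (s + c) / s\<^sup>2"
    by (simp add: t_def field_simps power2_eq_square)
  moreover have "0 < s + c"
  proof -
    have "(2 * c + 1)\<^sup>2 = 4 * s + 4 * c - 3" by (simp add: s_def power2_eq_square algebra_simps)
    then show ?thesis using zero_le_power2[of "2 * c + 1"] by linarith
  qed
  ultimately have "0 < t * b + t\<^sup>2 * c"
    using \<open>b \<noteq> 0\<close> \<open>0 < s\<close> by simp
  then show False using assms[of t] by linarith
qed

lemma symmetric_mat_rayleigh_maximizer: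
  fixes A :: "real^'n^'n"
  assumes A: "symmetric_mat A" and W: "subspace W" and inv: "\<And>x. x \<in> W \<Longrightarrow> A *v x \<in> W"
    and u: "u \<in> W" "norm u = 1"
    and max: "\<And>y. y \<in> W \<Longrightarrow> norm y = 1 \<Longrightarrow> y \<bullet> (A *v y) \<le> u \<bullet> (A *v u)"
  shows "A *v u = (u \<bullet> (A *v u)) *\<^sub>R u"
proof -
  define q where "q = u \<bullet> (A *v u)"
  define w where "w = A *v u - q *\<^sub>R u"
  have uu: "u \<bullet> u = 1" using u(2) by (simp add: norm_eq_1)
  have wW: "w \<in> W" using W u(1) inv by (simp add: w_def subspace_diff subspace_scale)
  have wu: "w \<bullet> u = 0"
    using symmetric_mat_inner[OF A, of u u] uu by (simp add: w_def inner_diff_left q_def)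
  have wAu: "w \<bullet> (A *v u) = w \<bullet> w"
    using wu by (simp add: w_def inner_diff_right)
  \<comment> \<open>compare with the unit vector in direction u + t w, which stays in W\<close>
  have "t * (2 * (w \<bullet> w)) + t\<^sup>2 * (w \<bullet> (A *v w) - q * (w \<bullet> w)) \<le> 0" for t
  proof -
    define z where "z = u + t *\<^sub>R w"
    have zz: "z \<bullet> z = 1 + t\<^sup>2 * (w \<bullet> w)"
      using uu wu by (simp add: z_def inner_add_left inner_add_right inner_commute power2_eq_square)
    then have nz: "norm z > 0"
      by (metis add_pos_nonneg inner_ge_zero inner_gt_zero_iff mult_nonneg_nonneg zero_less_norm_iff
          zero_less_one zero_le_power2)
    have "z /\<^sub>R norm z \<in> W" using W u(1) wW by (simp add: z_def subspace_add subspace_scale)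
    moreover have "norm (z /\<^sub>R norm z) = 1" using nz by simp
    ultimately have "(z /\<^sub>R norm z) \<bullet> (A *v (z /\<^sub>R norm z)) \<le> q"
      unfolding q_def by (rule max)
    then have "(z \<bullet> (A *v z)) / (norm z)\<^sup>2 \<le> q"
      by (simp add: matrix_vector_mult_scaleR power2_eq_square divide_inverse mult_ac)
    then have "z \<bullet> (A *v z) \<le> q * (z \<bullet> z)"
      using nz by (simp add: divide_le_eq power2_norm_eq_inner)
    moreover have "z \<bullet> (A *v z) = q + 2 * t * (w \<bullet> w) + t\<^sup>2 * (w \<bullet> (A *v w))"
      using symmetric_mat_inner[OF A, of w u] wAu inner_commute[of u "A *v w"]
      by (simp add: z_def q_def matrix_vector_right_distrib matrix_vector_mult_scaleR
          inner_add_left inner_add_right power2_eq_square algebra_simps)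
    ultimately show ?thesis using zz by (simp add: algebra_simps)
  qed
  then have "2 * (w \<bullet> w) = 0" by (rule quadratic_nonpos_imp_linear_coeff_zero)
  then show ?thesis by (simp add: w_def q_def)
qed

lemma symmetric_mat_eigenvector_orthogonal:
  fixes A :: "real^'n^'n"
  assumes A: "symmetric_mat A" and "finite V" and "card V < CARD('n)"
    and eig: "\<And>v. v \<in> V \<Longrightarrow> \<exists>l. A *v v = l *\<^sub>R v"
  shows "\<exists>u l. norm u = 1 \<and> (\<forall>v\<in>V. v \<bullet> u = 0) \<and> A *v u = l *\<^sub>R u"
proof -
  define W where "W = {y. \<forall>v\<in>V. orthogonal v y}"
  define K where "K = sphere 0 1 \<inter> W"
  have W: "subspace W" unfolding W_def by (rule subspace_orthogonal_to_vectors)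
  have inv: "A *v x \<in> W" if "x \<in> W" for x
  proof -
    have "v \<bullet> (A *v x) = 0" if "v \<in> V" for v
    proof -
      obtain l where "A *v v = l *\<^sub>R v" using eig \<open>v \<in> V\<close> by blast
      then show ?thesis
        using symmetric_mat_inner[OF A, of v x] \<open>x \<in> W\<close> \<open>v \<in> V\<close>
        by (simp add: W_def orthogonal_def)
    qed
    then show ?thesis by (simp add: W_def orthogonal_def)
  qed
  have "dim V < DIM(real^'n)"
    using dim_le_card'[OF \<open>finite V\<close>] \<open>card V < CARD('n)\<close> by simp
  then obtain x where x: "x \<noteq> 0" "\<And>y. y \<in> span V \<Longrightarrow> orthogonal x y"
    using orthogonal_to_subspace_exists by blast
  then have "x /\<^sub>R norm x \<in> K"
    by (simp add: K_def W_def orthogonal_commute span_base orthogonal_clauses)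
  then have "K \<noteq> {}" by auto
  moreover have "compact K"
    unfolding K_def by (intro compact_Int_closed compact_sphere closed_subspace W)
  moreover have "continuous_on K (\<lambda>x. x \<bullet> (A *v x))"
    by (intro continuous_intros linear_continuous_on linear_conv_bounded_linear[THEN iffD1]) auto
  ultimately obtain u where "u \<in> K" and umax: "\<And>y. y \<in> K \<Longrightarrow> y \<bullet> (A *v y) \<le> u \<bullet> (A *v u)"
    using continuous_attains_sup[of K "\<lambda>x. x \<bullet> (A *v x)"] by blast
  then have u: "u \<in> W" "norm u = 1" by (auto simp: K_def)
  have "A *v u = (u \<bullet> (A *v u)) *\<^sub>R u"
  proof (rule symmetric_mat_rayleigh_maximizer[OF A W _ u])
    show "A *v y \<in> W" if "y \<in> W" for y using inv that .
    show "y \<bullet> (A *v y) \<le> u \<bullet> (A *v u)" if "y \<in> W" "norm y = 1" for y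
      using umax that by (simp add: K_def)
  qed
  moreover have "\<forall>v\<in>V. v \<bullet> u = 0" using u(1) by (simp add: W_def orthogonal_def)
  ultimately show ?thesis using u(2) by blast
qed

lemma symmetric_mat_orthonormal_eigenvectors:
  fixes A :: "real^'n^'n" and I :: "'n set"
  assumes A: "symmetric_mat A"
  shows "\<exists>v l. (\<forall>i\<in>I. norm (v i) = 1 \<and> A *v v i = l i *\<^sub>R v i) \<and>
           (\<forall>i\<in>I. \<forall>j\<in>I. i \<noteq> j \<longrightarrow> v i \<bullet> v j = 0)"
  using finite[of I]
proof (induction I rule: finite_induct)
  case empty
  then show ?case by auto
next
  case (insert a I)
  from insert.IH obtain v l where
    vl: "(\<forall>i\<in>I. norm (v i) = 1 \<and> A *v v i = l i *\<^sub>R v i) \<and>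
         (\<forall>i\<in>I. \<forall>j\<in>I. i \<noteq> j \<longrightarrow> v i \<bullet> v j = 0)"
    by (elim exE)
  then have eig: "\<forall>i\<in>I. norm (v i) = 1 \<and> A *v v i = l i *\<^sub>R v i"
    and orth: "\<forall>i\<in>I. \<forall>j\<in>I. i \<noteq> j \<longrightarrow> v i \<bullet> v j = 0"
    by simp_all
  have "card (v ` I) \<le> card I" by (rule card_image_le) (use insert in simp)
  also have "\<dots> < CARD('n)"
    using insert card_mono[of UNIV "insert a I"] by simp
  finally obtain u m where u: "norm u = 1" "\<forall>w\<in>v ` I. w \<bullet> u = 0" "A *v u = m *\<^sub>R u"
    using symmetric_mat_eigenvector_orthogonal[OF A finite_imageI[OF insert(1)]] eig by blast
  show ?case
  proof (intro exI conjI)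
    show "\<forall>i\<in>insert a I. norm ((v(a := u)) i) = 1 \<and> A *v (v(a := u)) i = (l(a := m)) i *\<^sub>R (v(a := u)) i"
      using eig u by auto
    show "\<forall>i\<in>insert a I. \<forall>j\<in>insert a I. i \<noteq> j \<longrightarrow> (v(a := u)) i \<bullet> (v(a := u)) j = 0"
    proof (intro ballI impI)
      fix i j assume ij: "i \<in> insert a I" "j \<in> insert a I" "i \<noteq> j"
      consider "i = a" | "j = a" | "i \<noteq> a" "j \<noteq> a" by blast
      then show "(v(a := u)) i \<bullet> (v(a := u)) j = 0"
        by cases (use ij u(2) orth in \<open>auto simp: inner_commute\<close>)
    qed
  qed
qed

theorem symmetric_mat_spectral:
  fixes A :: "real^'n^'n"
  assumes A: "symmetric_mat A"
  obtains U d where "orthogonal_matrix U" "A = U ** diag_mat d ** transpose U"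
proof -
  from symmetric_mat_orthonormal_eigenvectors[OF A, of UNIV] obtain v :: "'n \<Rightarrow> real^'n" and l
    where "(\<forall>i\<in>UNIV. norm (v i) = 1 \<and> A *v v i = l i *\<^sub>R v i) \<and>
           (\<forall>i\<in>UNIV. \<forall>j\<in>UNIV. i \<noteq> j \<longrightarrow> v i \<bullet> v j = 0)"
    by (elim exE)
  then have eig: "\<And>i. norm (v i) = 1" "\<And>i. A *v v i = l i *\<^sub>R v i"
    and orth: "\<And>i j. i \<noteq> j \<Longrightarrow> v i \<bullet> v j = 0"
    by simp_all
  define U :: "real^'n^'n" where "U = (\<chi> i j. v j $ i)"
  have "(transpose U ** U) $ i $ j = mat 1 $ i $ j" for i j
  proof -
    have "(transpose U ** U) $ i $ j = v i \<bullet> v j"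
      by (simp add: U_def matrix_matrix_mult_def transpose_def inner_vec_def)
    then show ?thesis
      using eig(1)[of i] orth[of i j] by (cases "i = j") (simp_all add: norm_eq_1 mat_def)
  qed
  then have U: "orthogonal_matrix U" by (simp add: orthogonal_matrix vec_eq_iff)
  have "(A ** U) $ i $ j = (U ** diag_mat l) $ i $ j" for i j
  proof -
    have "(A ** U) $ i $ j = (A *v v j) $ i"
      by (simp add: U_def matrix_matrix_mult_def matrix_vector_mult_def)
    then show ?thesis using eig(2) by (simp add: matrix_mult_diag_mat U_def)
  qed
  then have AU: "A ** U = U ** diag_mat l" by (simp add: vec_eq_iff)
  have "A = A ** (U ** transpose U)" using U by (simp add: orthogonal_matrix_def)
  also have "\<dots> = U ** diag_mat l ** transpose U" by (simp add: matrix_mul_assoc AU)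
  finally show thesis using U that by blast
qed

lemma orthogonal_matrix_invertible: "orthogonal_matrix U \<Longrightarrow> invertible U"
  by (auto simp: orthogonal_matrix_def invertible_def)

lemma orthogonal_conj_eq_iff:
  fixes U :: "real^'n^'n"
  assumes "orthogonal_matrix U"
  shows "A = U ** D ** transpose U \<longleftrightarrow> transpose U ** A ** U = D"
proof
  assume "A = U ** D ** transpose U"
  then show "transpose U ** A ** U = D" using assms
    by (simp add: orthogonal_matrix_def matrix_mul_assoc)
       (metis matrix_mul_assoc matrix_mul_lid matrix_mul_rid)
next
  assume "transpose U ** A ** U = D"
  then show "A = U ** D ** transpose U" using assms
    by (simp add: orthogonal_matrix_def matrix_mul_assoc)
       (metis matrix_mul_assoc matrix_mul_lid matrix_mul_rid)
qed

lemma orthogonal_conj_mult: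
  fixes U :: "real^'n^'n"
  assumes "orthogonal_matrix U"
  shows "(U ** A ** transpose U) ** (U ** B ** transpose U) = U ** (A ** B) ** transpose U"
proof -
  have "(U ** A ** transpose U) ** (U ** B ** transpose U) = U ** A ** (transpose U ** U) ** B ** transpose U"
    by (simp add: matrix_mul_assoc)
  also have "\<dots> = U ** (A ** B) ** transpose U"
    using assms by (simp add: orthogonal_matrix_def matrix_mul_assoc)
  finally show ?thesis .
qed

lemma orthogonal_conj_diff:
  fixes U :: "real^'n^'n"
  shows "U ** A ** transpose U - U ** B ** transpose U = U ** (A - B) ** transpose U"
  by (simp add: matrix_diff_ldistrib matrix_diff_rdistrib)

lemma det_orthogonal_conj:
  fixes U :: "real^'n^'n"
  assumes "orthogonal_matrix U"
  shows "det (U ** A ** transpose U) = det A"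
proof -
  have "det U * det (transpose U) = 1"
    using assms det_mul[of U "transpose U"] by (simp add: orthogonal_matrix_def)
  moreover have "det (U ** A ** transpose U) = det A * (det U * det (transpose U))"
    by (simp add: det_mul mult_ac)
  ultimately show ?thesis by simp
qed

lemma trace_orthogonal_conj:
  fixes U :: "real^'n^'n"
  assumes "orthogonal_matrix U"
  shows "trace (U ** A ** transpose U) = trace A"
proof -
  have "trace (U ** A ** transpose U) = trace (transpose U ** (U ** A))" by (rule trace_mul_sym)
  also have "\<dots> = trace A" using assms by (simp add: matrix_mul_assoc orthogonal_matrix_def)
  finally show ?thesis .
qed

lemma psd_mat_orthogonal_conj_iff:
  "orthogonal_matrix U \<Longrightarrow> psd_mat (U ** A ** transpose U) \<longleftrightarrow> psd_mat A"
  using psd_mat_congruence_iff[of "transpose U" A] orthogonal_matrix_invertible[of "transpose U"]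
  by simp

lemma pd_mat_orthogonal_conj_iff:
  "orthogonal_matrix U \<Longrightarrow> pd_mat (U ** A ** transpose U) \<longleftrightarrow> pd_mat A"
  using pd_mat_congruence_iff[of "transpose U" A] orthogonal_matrix_invertible[of "transpose U"]
  by simp

lemma pd_mat_spectral:
  fixes A :: "real^'n^'n"
  assumes "pd_mat A"
  obtains U d where "orthogonal_matrix U" "A = U ** diag_mat d ** transpose U" "\<forall>i. 0 < d i"
proof -
  have "symmetric_mat A" using assms by (simp add: pd_mat_def)
  then obtain U d where U: "orthogonal_matrix U" "A = U ** diag_mat d ** transpose U"
    by (rule symmetric_mat_spectral)
  then have "\<forall>i. 0 < d i"
    using assms by (simp add: pd_mat_orthogonal_conj_iff pd_mat_diag_mat_iff)
  with U that show thesis by blast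
qed

lemma pd_mat_det_pos:
  fixes A :: "real^'n^'n"
  assumes "pd_mat A"
  shows "0 < det A"
proof -
  obtain U d where "orthogonal_matrix U" "A = U ** diag_mat d ** transpose U" "\<forall>i. 0 < d i"
    by (rule pd_mat_spectral[OF assms])
  then show ?thesis by (simp add: det_orthogonal_conj det_diag_mat prod_pos)
qed

lemma pd_mat_invertible: "pd_mat A \<Longrightarrow> invertible A"
  using pd_mat_det_pos invertible_det_nz by (metis less_irrefl)

lemma ln_det_le_trace_minus_card:
  fixes A :: "real^'n^'n"
  assumes "pd_mat A"
  shows "ln (det A) \<le> trace A - CARD('n)"
proof -
  obtain U d where U: "orthogonal_matrix U" "A = U ** diag_mat d ** transpose U" "\<forall>i. 0 < d i"
    by (rule pd_mat_spectral[OF assms])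
  have "ln (det A) = (\<Sum>i\<in>UNIV. ln (d i))"
    using U by (simp add: det_orthogonal_conj det_diag_mat ln_prod less_imp_neq[symmetric])
  also have "\<dots> \<le> (\<Sum>i\<in>UNIV. d i - 1)"
    using U(3) by (intro sum_mono) (simp add: ln_le_minus_one)
  also have "\<dots> = trace A - CARD('n)"
    using U by (simp add: trace_orthogonal_conj trace_diag_mat sum_subtractf)
  finally show ?thesis .
qed

section \<open>Square root and projection onto the PSD cone\<close>

lemma mat_sqrt_orthogonal_diag:
  fixes U :: "real^'n^'n"
  assumes U: "orthogonal_matrix U" and g: "\<And>i. 0 < g i"
  shows "mat_sqrt (U ** diag_mat g ** transpose U) = U ** diag_mat (\<lambda>i. sqrt (g i)) ** transpose U"
  unfolding mat_sqrt_def
proof (rule the_equality)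
  define D where "D = diag_mat (\<lambda>i. sqrt (g i))"
  have DD: "D ** D = diag_mat g" using g by (simp add: D_def diag_mat_mult_diag_mat less_imp_le)
  have "pd_mat (U ** D ** transpose U)"
    using U g by (simp add: pd_mat_orthogonal_conj_iff pd_mat_diag_mat_iff D_def)
  moreover have "(U ** D ** transpose U) ** (U ** D ** transpose U) = U ** diag_mat g ** transpose U"
    using U by (simp add: orthogonal_conj_mult DD)
  ultimately show "pd_mat (U ** D ** transpose U) \<and>
      (U ** D ** transpose U) ** (U ** D ** transpose U) = U ** diag_mat g ** transpose U"
    by blast
  fix T assume T: "pd_mat T \<and> T ** T = U ** diag_mat g ** transpose U"
  define N where "N = T ** U - U ** D"
  have "T ** N + N ** D = T ** T ** U - U ** (D ** D)"
    by (simp add: N_def matrix_diff_ldistrib matrix_diff_rdistrib matrix_mul_assoc)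
  also have "\<dots> = 0"
    using T U DD by (simp add: orthogonal_matrix_def flip: matrix_mul_assoc)
  finally have TN: "T ** N = - (N ** D)" by (simp add: eq_neg_iff_add_eq_0)
  \<comment> \<open>each column of N is an eigenvector of T for the eigenvalue -sqrt (g j) \<le> 0, hence zero\<close>
  have "column j N = 0" for j
  proof (rule ccontr)
    assume nz: "column j N \<noteq> 0"
    have "T *v column j N = column j (T ** N)"
      by (simp add: column_def matrix_matrix_mult_def matrix_vector_mult_def)
    also have "\<dots> = (- sqrt (g j)) *\<^sub>R column j N"
      by (simp add: TN column_def vec_eq_iff D_def matrix_mult_diag_mat)
    finally have "T *v column j N = (- sqrt (g j)) *\<^sub>R column j N" .
    then have "column j N \<bullet> (T *v column j N) \<le> 0"
      using g[of j] by (simp add: mult_nonneg_nonneg)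
    with nz T show False by (auto simp: pd_mat_def not_le)
  qed
  then have "T ** U = U ** D" by (simp add: N_def vec_eq_iff column_def)
  then have "T ** U ** transpose U = U ** D ** transpose U" by simp
  then show "T = U ** D ** transpose U"
    using U by (simp add: orthogonal_matrix_def flip: matrix_mul_assoc)
qed

lemma pd_mat_mat_sqrt:
  fixes G :: "real^'n^'n"
  assumes "pd_mat G"
  shows "pd_mat (mat_sqrt G)" "mat_sqrt G ** mat_sqrt G = G"
proof -
  obtain U g where U: "orthogonal_matrix U" "G = U ** diag_mat g ** transpose U" "\<forall>i. 0 < g i"
    by (rule pd_mat_spectral[OF assms])
  then show "pd_mat (mat_sqrt G)" "mat_sqrt G ** mat_sqrt G = G"
    by (simp_all add: mat_sqrt_orthogonal_diag pd_mat_orthogonal_conj_iff pd_mat_diag_mat_iff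
        orthogonal_conj_mult diag_mat_mult_diag_mat less_imp_le)
qed

lemma frob_norm_eq_norm: "frob_norm A = norm A"
  by (simp add: frob_norm_def norm_vec_def L2_set_def real_sqrt_pow2 sum_nonneg)

lemma norm_matrix_power2: "(norm A)\<^sup>2 = (\<Sum>i\<in>UNIV. \<Sum>j\<in>UNIV. (A $ i $ j)\<^sup>2)"
  for A :: "real^'n^'m"
  unfolding power2_norm_eq_inner by (simp add: inner_vec_def power2_eq_square)

lemma norm_matrix_power2_eq_trace: "(norm A)\<^sup>2 = trace (transpose A ** (A :: real^'n^'m))"
  unfolding norm_matrix_power2 trace_def matrix_matrix_mult_def transpose_def
  by (simp add: power2_eq_square) (rule sum.swap)

lemma norm_orthogonal_conj:
  fixes U :: "real^'n^'n"
  assumes "orthogonal_matrix U"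
  shows "norm (U ** A ** transpose U) = norm A"
proof -
  have "transpose (U ** A ** transpose U) ** (U ** A ** transpose U)
      = U ** (transpose A ** A) ** transpose U"
    using assms orthogonal_conj_mult[of U "transpose A" A]
    by (simp add: matrix_transpose_mul matrix_mul_assoc)
  then have "(norm (U ** A ** transpose U))\<^sup>2 = (norm A)\<^sup>2"
    using assms by (simp add: norm_matrix_power2_eq_trace trace_orthogonal_conj)
  then show ?thesis by simp
qed

lemma sum_diagonal_power2_le_norm: "(\<Sum>i\<in>UNIV. (A $ i $ i)\<^sup>2) \<le> (norm A)\<^sup>2"
  unfolding norm_matrix_power2 by (rule sum_mono, rule member_le_sum) auto

lemma norm_diag_mat_power2: "(norm (diag_mat d))\<^sup>2 = (\<Sum>i\<in>UNIV. (d i)\<^sup>2)"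
  by (simp add: norm_matrix_power2 diag_mat_def if_distrib[of "\<lambda>x. x\<^sup>2"] sum.delta cong: if_cong)

lemma convex_psd_mat: "convex {A :: real^'n^'n. psd_mat A}"
  by (rule convexI) (simp add: psd_mat_add psd_mat_scaleR)

lemma closed_psd_mat: "closed {A :: real^'n^'n. psd_mat A}"
proof -
  have "{A :: real^'n^'n. psd_mat A} =
      (\<Inter>i. \<Inter>j. {A. A $ i $ j = A $ j $ i}) \<inter> (\<Inter>x. {A. 0 \<le> x \<bullet> (A *v x)})"
    by (auto simp: psd_mat_def symmetric_mat_def vec_eq_iff transpose_def)
  also have "closed \<dots>"
    by (intro closed_Int closed_INT ballI closed_Collect_eq closed_Collect_le continuous_intros)
       (auto simp: matrix_vector_mult_def inner_vec_def intro!: continuous_intros)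
  finally show ?thesis .
qed

lemma proj_psd_orthogonal_diag:
  fixes U :: "real^'n^'n"
  assumes U: "orthogonal_matrix U"
  shows "proj_psd (U ** diag_mat x ** transpose U) = U ** diag_mat (\<lambda>i. max (x i) 0) ** transpose U"
    (is "proj_psd ?X = ?P")
proof -
  have psd: "psd_mat ?P" using U by (simp add: psd_mat_orthogonal_conj_iff psd_mat_diag_mat_iff)
  have min: "norm (?X - ?P) \<le> norm (?X - Q)" if Q: "psd_mat Q" for Q
  proof -
    define Q' where "Q' = transpose U ** Q ** U"
    have Q': "psd_mat Q'" unfolding Q'_def by (rule psd_mat_congruence[OF Q])
    have "Q = U ** Q' ** transpose U" using U by (simp add: Q'_def orthogonal_conj_eq_iff)
    then have XQ: "norm (?X - Q) = norm (diag_mat x - Q')"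
      using U by (simp add: orthogonal_conj_diff norm_orthogonal_conj)
    have "(norm (?X - ?P))\<^sup>2 = (\<Sum>i\<in>UNIV. (x i - max (x i) 0)\<^sup>2)"
      using U by (simp add: orthogonal_conj_diff norm_orthogonal_conj diag_mat_diff norm_diag_mat_power2)
    also have "\<dots> \<le> (\<Sum>i\<in>UNIV. ((diag_mat x - Q') $ i $ i)\<^sup>2)"
    proof (rule sum_mono)
      fix i
      define q where "q = Q' $ i $ i"
      have "0 \<le> q" unfolding q_def by (rule psd_mat_diagonal_nonneg[OF Q'])
      have "(x i - max (x i) 0)\<^sup>2 \<le> (x i - q)\<^sup>2"
      proof (cases "0 \<le> x i")
        case False
        have "(- x i) * (- x i) \<le> (q - x i) * (q - x i)"
          using \<open>0 \<le> q\<close> False by (intro mult_mono) auto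
        with False show ?thesis by (simp add: power2_eq_square algebra_simps)
      qed simp
      then show "(x i - max (x i) 0)\<^sup>2 \<le> ((diag_mat x - Q') $ i $ i)\<^sup>2"
        by (simp add: diag_mat_def q_def)
    qed
    also have "\<dots> \<le> (norm (?X - Q))\<^sup>2" unfolding XQ by (rule sum_diagonal_power2_le_norm)
    finally show ?thesis by (simp add: power2_le_iff_abs_le)
  qed
  show ?thesis
    unfolding proj_psd_def frob_norm_eq_norm
  proof (rule the_equality)
    show "psd_mat ?P \<and> (\<forall>Q. psd_mat Q \<longrightarrow> norm (?X - ?P) \<le> norm (?X - Q))"
      using psd min by blast
    fix P assume P: "psd_mat P \<and> (\<forall>Q. psd_mat Q \<longrightarrow> norm (?X - P) \<le> norm (?X - Q))"
    show "P = ?P"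
      by (rule any_closest_point_unique[OF convex_psd_mat closed_psd_mat, of P ?P ?X])
         (use P psd min in \<open>auto simp: dist_norm\<close>)
  qed
qed

lemma proj_psd_mat_1_minus:
  fixes U :: "real^'n^'n"
  assumes U: "orthogonal_matrix U" and C: "C = U ** diag_mat c ** transpose U"
  shows "proj_psd (mat 1 - C) = U ** diag_mat (\<lambda>i. max 1 (c i)) ** transpose U - C"
proof -
  have "mat 1 - C = U ** diag_mat (\<lambda>i. 1) ** transpose U - U ** diag_mat c ** transpose U"
    using U by (simp add: C diag_mat_one orthogonal_matrix_def)
  also have "\<dots> = U ** diag_mat (\<lambda>i. 1 - c i) ** transpose U"
    by (simp add: orthogonal_conj_diff diag_mat_diff)
  finally have "mat 1 - C = U ** diag_mat (\<lambda>i. 1 - c i) ** transpose U" .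
  moreover have "(\<lambda>i. max (1 - c i) 0) = (\<lambda>i. max 1 (c i) - c i)" by (auto simp: max_def)
  ultimately show ?thesis
    using U by (simp add: proj_psd_orthogonal_diag C orthogonal_conj_diff diag_mat_diff)
qed

section \<open>Maximising ln det Z - tr Z above a symmetric matrix\<close>

lemma ln_det_minus_trace_le_diag:
  fixes W :: "real^'n^'n"
  assumes W: "pd_mat W" and Wc: "psd_mat (W - diag_mat c)"
  shows "ln (det W) - trace W \<le> (\<Sum>i\<in>UNIV. ln (max 1 (c i)) - max 1 (c i))"
proof -
  define e where "e i = max 1 (c i)" for i
  have e: "1 \<le> e i" for i by (simp add: e_def)
  then have e0: "0 < e i" for i using less_le_trans zero_less_one by blast
  then have enz: "e i \<noteq> 0" for i by (metis less_irrefl)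
  \<comment> \<open>rescale W by diag(e)^(-1/2) and apply ln det \<le> trace - n to the rescaled matrix\<close>
  define H where "H = diag_mat (\<lambda>i. 1 / sqrt (e i))"
  define V where "V = H ** W ** H"
  have "pd_mat H" using e0 by (simp add: H_def pd_mat_diag_mat_iff)
  moreover have "transpose H = H" by (simp add: H_def transpose_diag_mat)
  ultimately have "pd_mat V"
    using pd_mat_congruence[OF W pd_mat_invertible, of H] by (simp add: V_def)
  then have lnV: "ln (det V) \<le> (\<Sum>i\<in>UNIV. W $ i $ i / e i - 1)"
    using ln_det_le_trace_minus_card[of V] e0
    by (simp add: V_def H_def trace_def matrix_mult_diag_mat diag_mat_mult sum_subtractf
        real_sqrt_mult[symmetric] less_imp_le)
  have "det V = det W * (\<Prod>i\<in>UNIV. 1 / e i)"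
    using e0 by (simp add: V_def H_def det_mul det_diag_mat prod.distrib[symmetric] less_imp_le
        flip: real_sqrt_mult)
  then have "ln (det V) = ln (det W) + ln (\<Prod>i\<in>UNIV. 1 / e i)"
    using pd_mat_det_pos[OF W] e0 by (simp add: ln_mult prod_pos enz)
  also have "ln (\<Prod>i\<in>UNIV. 1 / e i) = - (\<Sum>i\<in>UNIV. ln (e i))"
    by (simp add: ln_prod ln_div sum_negf enz)
  finally have "ln (det V) = ln (det W) - (\<Sum>i\<in>UNIV. ln (e i))" by simp
  moreover have "W $ i $ i / e i - 1 \<le> W $ i $ i - e i" for i
  proof (cases "c i \<le> 1")
    case False
    then have "e i = c i" by (simp add: e_def)
    moreover have "c i \<le> W $ i $ i"
      using psd_mat_diagonal_nonneg[OF Wc, of i] by (simp add: diag_mat_def)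
    ultimately have "0 \<le> (W $ i $ i - e i) * (e i - 1) / e i" using False by simp
    then show ?thesis using e0[of i] by (simp add: field_simps)
  qed (simp add: e_def)
  then have "(\<Sum>i\<in>UNIV. W $ i $ i / e i - 1) \<le> (\<Sum>i\<in>UNIV. W $ i $ i - e i)"
    by (rule sum_mono)
  ultimately show ?thesis
    using lnV by (simp add: e_def trace_def sum_subtractf)
qed

lemma ln_det_minus_trace_le_orthogonal:
  fixes U Z :: "real^'n^'n"
  assumes U: "orthogonal_matrix U" and Z: "pd_mat Z"
    and Zc: "psd_mat (Z - U ** diag_mat c ** transpose U)"
  defines "E \<equiv> U ** diag_mat (\<lambda>i. max 1 (c i)) ** transpose U"
  shows "ln (det Z) - trace Z \<le> ln (det E) - trace E"
proof -
  define W where "W = transpose U ** Z ** U"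
  have ZW: "Z = U ** W ** transpose U" using U by (simp add: W_def orthogonal_conj_eq_iff)
  have "ln (det Z) - trace Z = ln (det W) - trace W"
    using U by (simp add: ZW det_orthogonal_conj trace_orthogonal_conj)
  also have "\<dots> \<le> (\<Sum>i\<in>UNIV. ln (max 1 (c i)) - max 1 (c i))"
  proof (rule ln_det_minus_trace_le_diag)
    show "pd_mat W" using U Z by (simp add: ZW pd_mat_orthogonal_conj_iff)
    show "psd_mat (W - diag_mat c)"
      using U Zc by (simp add: ZW orthogonal_conj_diff psd_mat_orthogonal_conj_iff)
  qed
  also have "\<dots> = ln (det E) - trace E"
    using U by (simp add: E_def det_orthogonal_conj trace_orthogonal_conj det_diag_mat
        trace_diag_mat ln_prod sum_subtractf)
  finally show ?thesis .
qed

lemma feasible_iff_whitened: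
  fixes B T Y :: "real^'n^'n"
  assumes k: "0 < k" and B: "symmetric_mat B" and T: "invertible T" "symmetric_mat T"
  shows "feasible k B Y \<longleftrightarrow>
    pd_mat (T ** (B + (1/k) *\<^sub>R Y) ** T) \<and> psd_mat (T ** (B + (1/k) *\<^sub>R Y) ** T - T ** B ** T)"
proof -
  have tT: "transpose T = T" using T(2) by (simp add: symmetric_mat_def)
  have "T ** (B + (1/k) *\<^sub>R Y) ** T - T ** B ** T = (1/k) *\<^sub>R (transpose T ** Y ** T)"
    by (simp add: tT matrix_add_ldistrib matrix_add_rdistrib matrix_scalar_ac scalar_matrix_assoc)
  then have psd: "psd_mat (T ** (B + (1/k) *\<^sub>R Y) ** T - T ** B ** T) \<longleftrightarrow> psd_mat Y"
    using k T(1) by (simp add: psd_mat_scaleR_iff psd_mat_congruence_iff)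
  have "Y - - (k *\<^sub>R B) = k *\<^sub>R (B + (1/k) *\<^sub>R Y)" using k by (simp add: algebra_simps)
  then have pd: "pd_mat (Y - - (k *\<^sub>R B)) \<longleftrightarrow> pd_mat (T ** (B + (1/k) *\<^sub>R Y) ** T)"
    using k T(1) pd_mat_congruence_iff[of T] by (simp add: pd_mat_scaleR_iff tT)
  have "symmetric_mat (- (k *\<^sub>R B))"
    using B by (simp add: symmetric_mat_def transpose_scalar vec_eq_iff transpose_def)
  then show ?thesis
    using psd pd by (auto simp: feasible_def loewner_less_def psd_mat_def)
qed

lemma objective_whitened:
  fixes G B S T Y :: "real^'n^'n"
  assumes k: "0 < k" and ST: "S ** T = mat 1" and G: "G = S ** S"
    and Z: "pd_mat (T ** (B + (1/k) *\<^sub>R Y) ** T)"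
  shows "objective k G B Y =
    k * (ln (det (T ** (B + (1/k) *\<^sub>R Y) ** T)) - trace (T ** (B + (1/k) *\<^sub>R Y) ** T))
    + k * trace (T ** B ** T) + k * ln (det G)"
proof -
  define A where "A = B + (1/k) *\<^sub>R Y"
  define Z where "Z = T ** A ** T"
  have TS: "T ** S = mat 1" using ST matrix_left_right_inverse by blast
  have "G ** (T ** T) = S ** (S ** T) ** T" by (simp add: G matrix_mul_assoc)
  then have "matrix_inv G = T ** T" by (intro matrix_inv_unique) (simp add: ST)
  then have "trace (Y ** matrix_inv G) = trace (T ** Y ** T)"
    using trace_mul_sym[of "Y ** T" T] by (simp add: matrix_mul_assoc)
  also have "T ** Y ** T = k *\<^sub>R (Z - T ** B ** T)"
    using k by (simp add: Z_def A_def matrix_add_ldistrib matrix_add_rdistrib matrix_scalar_ac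
        scalar_matrix_assoc)
  finally have tr: "trace (Y ** matrix_inv G) = k * (trace Z - trace (T ** B ** T))"
    by (simp add: trace_def sum_distrib_left sum_subtractf algebra_simps)
  have "S ** Z ** S = (S ** T) ** A ** (T ** S)" by (simp add: Z_def matrix_mul_assoc)
  then have SZS: "S ** Z ** S = A" by (simp add: ST TS)
  have "det A = det G * det Z" unfolding SZS[symmetric] by (simp add: G det_mul mult_ac)
  moreover have "0 < det Z" using Z by (simp add: Z_def A_def pd_mat_det_pos)
  moreover have "det S \<noteq> 0" using ST by (metis det_I det_mul mult_zero_left zero_neq_one)
  ultimately have "ln (det A) = ln (det G) + ln (det Z)"
    by (simp add: G det_mul ln_mult)
  then show ?thesis by (simp add: objective_def tr Z_def A_def algebra_simps)
qed

lemma mat_sqrt_whitening: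
  fixes G :: "real^'n^'n"
  assumes "pd_mat G"
  defines "S \<equiv> mat_sqrt G" and "T \<equiv> matrix_inv (mat_sqrt G)"
  shows "S ** T = mat 1" "T ** S = mat 1" "S ** S = G" "invertible T" "symmetric_mat T"
proof -
  have S: "pd_mat S" "S ** S = G" using pd_mat_mat_sqrt[OF assms(1)] by (simp_all add: S_def)
  have invS: "invertible S" using S(1) by (rule pd_mat_invertible)
  then show ST: "S ** T = mat 1" "T ** S = mat 1" by (simp_all add: S_def T_def matrix_inv)
  show "S ** S = G" by (rule S(2))
  show "invertible T" using ST by (auto simp: invertible_def)
  show "symmetric_mat T"
    using S(1) symmetric_mat_matrix_inv[OF _ invS] by (simp add: S_def T_def pd_mat_def)
qed

theorem mainTheorem2:
  fixes G B :: "real^'n^'n" and k :: real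
  assumes "k > 0" and "pd_mat G" and "symmetric_mat B"
  defines "Ystar \<equiv> k *\<^sub>R (mat_sqrt G ** proj_psd (mat 1 - matrix_inv (mat_sqrt G) ** B ** matrix_inv (mat_sqrt G)) ** mat_sqrt G)"
  shows "feasible k B Ystar \<and> (\<forall>Y. feasible k B Y \<longrightarrow> objective k G B Y \<le> objective k G B Ystar)"
proof -
  define S where "S = mat_sqrt G"
  define T where "T = matrix_inv S"
  have ST: "S ** T = mat 1" "T ** S = mat 1" "S ** S = G" and T: "invertible T" "symmetric_mat T"
    using mat_sqrt_whitening[OF assms(2)] by (simp_all add: S_def T_def)
  note whitened = feasible_iff_whitened[OF \<open>k > 0\<close> assms(3) T]
  define C where "C = T ** B ** T"
  have "symmetric_mat C"
    using symmetric_mat_congruence[OF assms(3), of T] T(2) by (simp add: C_def symmetric_mat_def)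
  then obtain U c where U: "orthogonal_matrix U" and C: "C = U ** diag_mat c ** transpose U"
    by (rule symmetric_mat_spectral)
  define E where "E = U ** diag_mat (\<lambda>i. max 1 (c i)) ** transpose U"
  have "T ** (B + (1/k) *\<^sub>R Ystar) ** T = C + (T ** S) ** (E - C) ** (S ** T)"
    using \<open>k > 0\<close> proj_psd_mat_1_minus[OF U C]
    by (simp add: Ystar_def S_def[symmetric] T_def[symmetric] C_def[symmetric] E_def[symmetric]
        matrix_add_ldistrib matrix_add_rdistrib matrix_mul_assoc)
  then have Zstar: "T ** (B + (1/k) *\<^sub>R Ystar) ** T = E" by (simp add: ST)
  have "pd_mat E" "psd_mat (E - C)"
    using U by (simp_all add: E_def C orthogonal_conj_diff diag_mat_diff pd_mat_orthogonal_conj_iff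
        psd_mat_orthogonal_conj_iff pd_mat_diag_mat_iff psd_mat_diag_mat_iff less_max_iff_disj)
  then have feasible: "feasible k B Ystar" using whitened Zstar by (simp add: C_def)
  have "objective k G B Y \<le> objective k G B Ystar" if "feasible k B Y" for Y
  proof -
    define Z where "Z = T ** (B + (1/k) *\<^sub>R Y) ** T"
    have Z: "pd_mat Z" "psd_mat (Z - U ** diag_mat c ** transpose U)"
      using that whitened by (simp_all add: Z_def C_def[symmetric] C[symmetric])
    then have "ln (det Z) - trace Z \<le> ln (det E) - trace E"
      unfolding E_def by (rule ln_det_minus_trace_le_orthogonal[OF U])
    then show ?thesis
      using objective_whitened[OF \<open>k > 0\<close> ST(1) ST(3)[symmetric]] Z(1) \<open>pd_mat E\<close> Zstar
      by (simp add: Z_def \<open>k > 0\<close>)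
  qed
  with feasible show ?thesis by blast
qed

end
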